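(* For every finite simple graph $G$ and every positive integer $n$, $$\chi_i(G)\le \chi_i(S_G^n)\le \chi_i(G)+1.$$ Moreover, both bounds are attained: there exist graphs $G$ (e.g. $G=K_p$ with $p\ge 3$, or $G=C_k$ with $k\ge 3$, $k\not\equiv 0\pmod 4$) with $\chi_i(S_G^n)=\chi_i(G)$ for all $n\ge 1$, and there exist graphs $G$ (e.g. $G=C_k$ with $k\equiv 0\pmod 4$) with $\chi_i(S_G^n)=\chi_i(G)+1$ for all $n\ge 2$.
   Context: For a graph $H$, an injective $k$-coloring is a map $f:V(H)\to\{1,\dots,k\}$ such that any two distinct vertices $u,w$ with $f(u)=f(w)$ have no common neighbor; $\chi_i(H)$ is the least such $k$. For a graph $G$ and positive integer $n$, the generalized Sierpiński graph $S_G^n$ has vertex set $V(G)^n$, and $(u_1,\dots,u_n)$, $(v_1,\dots,v_n)$ are adjacent if and only if there is $d\in\{1,\dots,n\}$ with $u_i=v_i$ for $i<d$, $u_dv_d\in E(G)$, and $u_i=v_d$, $v_i=u_d$ for all $i>d$. $K_p$ is the complete graph on $p$ vertices and $C_k$ the cycle on $k$ vertices. *)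

theory Defs
  imports Main
begin

definition simple_graph :: "'a set \<Rightarrow> ('a \<Rightarrow> 'a \<Rightarrow> bool) \<Rightarrow> bool" where
  "simple_graph V E \<longleftrightarrow> finite V \<and> (\<forall>u v. E u v \<longrightarrow> u \<in> V \<and> v \<in> V)
     \<and> (\<forall>u v. E u v \<longrightarrow> E v u) \<and> (\<forall>u. \<not> E u u)"

definition injective_coloring ::
  "'a set \<Rightarrow> ('a \<Rightarrow> 'a \<Rightarrow> bool) \<Rightarrow> nat \<Rightarrow> ('a \<Rightarrow> nat) \<Rightarrow> bool" where
  "injective_coloring V E k f \<longleftrightarrow> (\<forall>v\<in>V. f v \<in> {1..k}) \<and>
     (\<forall>u\<in>V. \<forall>w\<in>V. u \<noteq> w \<and> f u = f w \<longrightarrow> \<not> (\<exists>x\<in>V. E x u \<and> E x w))"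

definition inj_chromatic :: "'a set \<Rightarrow> ('a \<Rightarrow> 'a \<Rightarrow> bool) \<Rightarrow> nat" where
  "inj_chromatic V E = (LEAST k. \<exists>f. injective_coloring V E k f)"

definition sierp_verts :: "'a set \<Rightarrow> nat \<Rightarrow> 'a list set" where
  "sierp_verts V n = {u. length u = n \<and> set u \<subseteq> V}"

definition sierp_adj :: "('a \<Rightarrow> 'a \<Rightarrow> bool) \<Rightarrow> nat \<Rightarrow> 'a list \<Rightarrow> 'a list \<Rightarrow> bool" where
  "sierp_adj E n u v \<longleftrightarrow> length u = n \<and> length v = n \<and>
     (\<exists>d<n. (\<forall>i<d. u ! i = v ! i) \<and> E (u ! d) (v ! d) \<and>
        (\<forall>i. d < i \<and> i < n \<longrightarrow> u ! i = v ! d \<and> v ! i = u ! d))"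

definition complete_graph_E :: "nat \<Rightarrow> nat \<Rightarrow> nat \<Rightarrow> bool" where
  "complete_graph_E p i j \<longleftrightarrow> i < p \<and> j < p \<and> i \<noteq> j"

definition cycle_graph_E :: "nat \<Rightarrow> nat \<Rightarrow> nat \<Rightarrow> bool" where
  "cycle_graph_E k i j \<longleftrightarrow> i < k \<and> j < k \<and> (j = (i + 1) mod k \<or> i = (j + 1) mod k)"

end

(*
  Two distinct words u, w of S_G^n have a common neighbour in only two ways:
  u = q a and w = q b where a and b have a common neighbour in G, or, up to
  exchanging u and w, u = q b a^(j+1) and w = q a b^j x where ab and bx are
  edges of G.  A colouring of S_G^n is therefore injective as soon as it
  separates these two kinds of pairs.  The words w x with x in V form a copy
  of G, which gives the lower bound.  For the upper bound, colour a word by an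
  optimal injective colouring of G at its last letter and give one fresh
  colour to the words whose last two letters coincide.  For K_p, adding the
  last letter to the binary value of the rest of the word gives a weight that
  does not change when b a^(j+1) is replaced by a b^j b, so the weight mod p
  is an injective p-colouring.  For C_k with k >= 5, colouring a word by the
  offset between its last two letters with the pattern 1,2,2,1,1,2,2,...,3,3
  uses three colours, which is chi_i(C_k) when 4 does not divide k.  When 4
  divides k, chi_i(C_k) = 2, but the words w00, w02 and w10 share the
  neighbour w01.
*)

theory Submission
  imports Defs "HOL-Number_Theory.Cong"
begin

section \<open>Graphs and injective colourings\<close>

lemma simple_graph_finite: "simple_graph V E \<Longrightarrow> finite V"
  unfolding simple_graph_def by blast

lemma simple_graph_irrefl: "simple_graph V E \<Longrightarrow> \<not> E a a"
  unfolding simple_graph_def by blast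

lemma simple_graph_in_verts: "simple_graph V E \<Longrightarrow> E a b \<Longrightarrow> a \<in> V \<and> b \<in> V"
  unfolding simple_graph_def by blast

lemma simple_graph_sym: "simple_graph V E \<Longrightarrow> E a b \<Longrightarrow> E b a"
  unfolding simple_graph_def by blast

lemma injective_coloring_in_range:
  "injective_coloring V E k f \<Longrightarrow> v \<in> V \<Longrightarrow> f v \<in> {1..k}"
  unfolding injective_coloring_def by blast

lemma injective_coloring_common_neighbour:
  "injective_coloring V E k f \<Longrightarrow> u \<in> V \<Longrightarrow> w \<in> V \<Longrightarrow> x \<in> V \<Longrightarrow> u \<noteq> w
    \<Longrightarrow> E x u \<Longrightarrow> E x w \<Longrightarrow> f u \<noteq> f w"
  unfolding injective_coloring_def by blast

lemma injective_coloring_card_le: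
  assumes f: "injective_coloring V E k f" and "S \<subseteq> V"
    and common: "\<And>u w. u \<in> S \<Longrightarrow> w \<in> S \<Longrightarrow> u \<noteq> w \<Longrightarrow> \<exists>x\<in>V. E x u \<and> E x w"
  shows "card S \<le> k"
proof -
  have "inj_on f S"
    using \<open>S \<subseteq> V\<close> injective_coloring_common_neighbour[OF f] common by (meson inj_onI subsetD)
  moreover have "f ` S \<subseteq> {1..k}"
    using \<open>S \<subseteq> V\<close> injective_coloring_in_range[OF f] by blast
  ultimately show ?thesis
    using card_inj_on_le[of f S "{1..k}"] by simp
qed

lemma injective_coloring_card:
  assumes "finite V" shows "\<exists>f. injective_coloring V E (card V) f"
proof -
  obtain h where h: "bij_betw h V {0..<card V}"
    using ex_bij_betw_finite_nat[OF assms] by blast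
  then have "injective_coloring V E (card V) (\<lambda>v. h v + 1)"
    unfolding injective_coloring_def bij_betw_def inj_on_def by (auto simp: Suc_le_eq)
  then show ?thesis by blast
qed

lemma inj_chromatic_le: "injective_coloring V E k f \<Longrightarrow> inj_chromatic V E \<le> k"
  unfolding inj_chromatic_def by (rule Least_le) blast

lemma injective_coloring_inj_chromatic:
  assumes "finite V" shows "\<exists>f. injective_coloring V E (inj_chromatic V E) f"
  unfolding inj_chromatic_def using injective_coloring_card[OF assms] by (rule LeastI_ex[OF exI])

lemma card_le_inj_chromatic:
  assumes "finite V" "S \<subseteq> V"
    and "\<And>u w. u \<in> S \<Longrightarrow> w \<in> S \<Longrightarrow> u \<noteq> w \<Longrightarrow> \<exists>x\<in>V. E x u \<and> E x w"
  shows "card S \<le> inj_chromatic V E"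
proof -
  obtain f where "injective_coloring V E (inj_chromatic V E) f"
    using injective_coloring_inj_chromatic[OF assms(1)] by blast
  then show ?thesis using injective_coloring_card_le assms(2,3) by blast
qed

lemma injective_coloring_fresh_colour:
  assumes c: "injective_coloring V E k c"
  shows "injective_coloring V E (k + 1) (\<lambda>u. if u = v then k + 1 else c u)"
  unfolding injective_coloring_def
proof (intro conjI ballI impI)
  fix u assume "u \<in> V"
  then show "(if u = v then k + 1 else c u) \<in> {1..k + 1}"
    using injective_coloring_in_range[OF c \<open>u \<in> V\<close>] by auto
next
  fix u w assume "u \<in> V" "w \<in> V"
    and uw: "u \<noteq> w \<and> (if u = v then k + 1 else c u) = (if w = v then k + 1 else c w)"
  moreover have "c u \<noteq> k + 1" "c w \<noteq> k + 1"
    using injective_coloring_in_range[OF c] \<open>u \<in> V\<close> \<open>w \<in> V\<close> by fastforce+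
  ultimately have "u \<noteq> w" "c u = c w"
    by (auto split: if_splits)
  then show "\<not> (\<exists>x\<in>V. E x u \<and> E x w)"
    using c \<open>u \<in> V\<close> \<open>w \<in> V\<close> unfolding injective_coloring_def by blast
qed

section \<open>Common neighbours in generalized Sierpinski graphs\<close>

lemma sierp_verts_finite: "finite V \<Longrightarrow> finite (sierp_verts V n)"
  unfolding sierp_verts_def using finite_lists_length_eq by (simp add: conj_commute)

lemma replicate_Suc_snoc: "replicate (Suc j) a = replicate j a @ [a]"
  by (simp add: replicate_append_same)

lemma eq_take_nth_replicate:
  assumes "d < length xs" and "\<forall>i. d < i \<and> i < length xs \<longrightarrow> xs ! i = c"
  shows "xs = take d xs @ xs ! d # replicate (length xs - Suc d) c"
proof -
  have "drop (Suc d) xs = replicate (length xs - Suc d) c"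
    using assms(2) by (intro replicate_eqI) (auto simp: in_set_conv_nth)
  then show ?thesis
    using id_take_nth_drop[OF assms(1)] by simp
qed

lemma sierp_adjE:
  assumes "sierp_adj E n y u"
  obtains q a b j where "y = q @ a # replicate j b" "u = q @ b # replicate j a" "E a b"
proof -
  from assms obtain d where d: "d < n" "length y = n" "length u = n" "\<forall>i<d. y ! i = u ! i"
      "E (y ! d) (u ! d)" "\<forall>i. d < i \<and> i < n \<longrightarrow> y ! i = u ! d \<and> u ! i = y ! d"
    unfolding sierp_adj_def by blast
  have "take d u = take d y"
    using d by (intro nth_equalityI) auto
  then have "u = take d y @ u ! d # replicate (n - Suc d) (y ! d)"
    using eq_take_nth_replicate[of d u "y ! d"] d by auto
  moreover have "y = take d y @ y ! d # replicate (n - Suc d) (u ! d)"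
    using eq_take_nth_replicate[of d y "u ! d"] d by auto
  ultimately show thesis
    using that d(5) by blast
qed

lemma sierp_adjI:
  "E a b \<Longrightarrow> sierp_adj E (length q + j + 1) (q @ a # replicate j b) (q @ b # replicate j a)"
  unfolding sierp_adj_def by (intro conjI exI[of _ "length q"]) (auto simp: nth_append)

lemma replicate_append_Cons_inject:
  "replicate i b @ x # xs = replicate j b @ y # ys \<Longrightarrow> x \<noteq> b \<Longrightarrow> y \<noteq> b
    \<Longrightarrow> i = j \<and> x = y \<and> xs = ys"
proof (induction i arbitrary: j)
  case 0
  then show ?case by (cases j) auto
next
  case (Suc i)
  then show ?case by (cases j) auto
qed

lemma append_Cons_replicate_inject:
  assumes "q1 @ a1 # replicate j1 b = q2 @ a2 # replicate j2 b" "a1 \<noteq> b" "a2 \<noteq> b"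
  shows "q1 = q2 \<and> a1 = a2 \<and> j1 = j2"
  using replicate_append_Cons_inject[of j1 b a1 "rev q1" j2 a2 "rev q2"] arg_cong[OF assms(1), of rev]
    assms(2,3) by simp

lemma snoc_eq_append_Cons_replicate_Suc:
  "q1 @ [a1] = q2 @ a2 # replicate (Suc i) b \<Longrightarrow> q1 = q2 @ a2 # replicate i b \<and> a1 = b"
  by (simp del: replicate_Suc add: replicate_Suc_snoc)

lemma sierp_common_neighbour_cases:
  assumes irrefl: "\<And>a. \<not> E a a"
    and "sierp_adj E n y u" "sierp_adj E n y w" "u \<noteq> w"
  obtains (last_letter) q a b c where "u = q @ [a]" "w = q @ [b]" "E c a" "E c b"
  | (swap) q a b j x where "u = q @ b # replicate (Suc j) a" "w = q @ a # replicate j b @ [x]"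
      "E a b" "E b x"
  | (swap') q a b j x where "w = q @ b # replicate (Suc j) a" "u = q @ a # replicate j b @ [x]"
      "E a b" "E b x"
proof -
  obtain q1 a1 b1 j1 where y1: "y = q1 @ a1 # replicate j1 b1"
    and u: "u = q1 @ b1 # replicate j1 a1" and e1: "E a1 b1"
    by (rule sierp_adjE[OF assms(2)])
  obtain q2 a2 b2 j2 where y2: "y = q2 @ a2 # replicate j2 b2"
    and w: "w = q2 @ b2 # replicate j2 a2" and e2: "E a2 b2"
    by (rule sierp_adjE[OF assms(3)])
  show thesis
  proof (cases j1; cases j2)
    assume "j1 = 0" "j2 = 0"
    then show thesis
      using last_letter[of q1 b1 b2 a1] y1 y2 u w e1 e2 by simp
  next
    fix i assume "j1 = 0" "j2 = Suc i"
    then have "q1 = q2 @ a2 # replicate i b2" "a1 = b2"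
      using snoc_eq_append_Cons_replicate_Suc[of q1 a1 q2 a2 i b2] y1 y2 by simp_all
    then have "u = q2 @ a2 # replicate i b2 @ [b1]" "E b2 b1"
      using u e1 \<open>j1 = 0\<close> by auto
    then show thesis
      using swap' w e2 \<open>j2 = Suc i\<close> by blast
  next
    fix i assume "j1 = Suc i" "j2 = 0"
    then have "q2 = q1 @ a1 # replicate i b1" "a2 = b1"
      using snoc_eq_append_Cons_replicate_Suc[of q2 a2 q1 a1 i b1] y1 y2 by simp_all
    then have "w = q1 @ a1 # replicate i b1 @ [b2]" "E b1 b2"
      using w e2 \<open>j2 = 0\<close> by auto
    then show thesis
      using swap u e1 \<open>j1 = Suc i\<close> by blast
  next
    fix i1 i2 assume "j1 = Suc i1" "j2 = Suc i2"
    then have "b1 = b2"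
      using arg_cong[OF trans[OF y1[symmetric] y2], of last]
      by (simp del: replicate_Suc add: replicate_Suc_snoc)
    moreover have "a1 \<noteq> b1" "a2 \<noteq> b2"
      using e1 e2 irrefl by metis+
    ultimately have "q1 = q2 \<and> a1 = a2 \<and> j1 = j2"
      using append_Cons_replicate_inject[of q1 a1 j1 b1 q2 a2 j2] y1 y2 by simp
    then show thesis
      using u w \<open>b1 = b2\<close> assms(4) by simp
  qed
qed

lemma injective_coloring_sierpI:
  assumes irrefl: "\<And>a. \<not> E a a"
    and range: "\<And>x. x \<in> sierp_verts V n \<Longrightarrow> f x \<in> {1..k}"
    and last_letter_distinct: "\<And>q a b c. q @ [a] \<in> sierp_verts V n \<Longrightarrow> q @ [b] \<in> sierp_verts V n
      \<Longrightarrow> a \<noteq> b \<Longrightarrow> E c a \<Longrightarrow> E c b \<Longrightarrow> f (q @ [a]) \<noteq> f (q @ [b])"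
    and swap_distinct: "\<And>q a b j x. q @ b # replicate (Suc j) a \<in> sierp_verts V n
      \<Longrightarrow> q @ a # replicate j b @ [x] \<in> sierp_verts V n \<Longrightarrow> E a b \<Longrightarrow> E b x
      \<Longrightarrow> f (q @ b # replicate (Suc j) a) \<noteq> f (q @ a # replicate j b @ [x])"
  shows "injective_coloring (sierp_verts V n) (sierp_adj E n) k f"
  unfolding injective_coloring_def
proof (intro conjI ballI impI notI)
  show "f x \<in> {1..k}" if "x \<in> sierp_verts V n" for x
    using range that .
next
  fix u w
  assume u: "u \<in> sierp_verts V n" and w: "w \<in> sierp_verts V n" and uw: "u \<noteq> w \<and> f u = f w"
    and "\<exists>y\<in>sierp_verts V n. sierp_adj E n y u \<and> sierp_adj E n y w"
  then obtain y where y: "sierp_adj E n y u" "sierp_adj E n y w" by blast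
  from uw have "u \<noteq> w" by simp
  with irrefl y show False
  proof (cases rule: sierp_common_neighbour_cases)
    case (last_letter q a b c)
    then show False using uw u w last_letter_distinct[of q a b c] by auto
  next
    case (swap q a b j x)
    then show False using uw u w swap_distinct[of q b j a x] by auto
  next
    case (swap' q a b j x)
    then show False using uw u w swap_distinct[of q b j a x] by auto
  qed
qed

section \<open>Bounds for arbitrary graphs\<close>

lemma injective_coloring_sierp_copy:
  assumes f: "injective_coloring (sierp_verts V (Suc m)) (sierp_adj E (Suc m)) k f"
    and w: "w \<in> sierp_verts V m"
  shows "injective_coloring V E k (\<lambda>u. f (w @ [u]))"
proof -
  have verts: "w @ [u] \<in> sierp_verts V (Suc m)" if "u \<in> V" for u
    using w that unfolding sierp_verts_def by auto
  have adj: "sierp_adj E (Suc m) (w @ [x]) (w @ [u])" if "E x u" for x u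
    using sierp_adjI[where E = E and a = x and b = u and q = w and j = 0] that w
    unfolding sierp_verts_def by simp
  show ?thesis
    unfolding injective_coloring_def
    using injective_coloring_in_range[OF f verts]
      injective_coloring_common_neighbour[OF f verts verts verts _ adj adj] by blast
qed

lemma inj_chromatic_le_sierp:
  assumes "finite V" "1 \<le> n"
  shows "inj_chromatic V E \<le> inj_chromatic (sierp_verts V n) (sierp_adj E n)"
proof (cases "V = {}")
  case True
  then have "injective_coloring V E 0 f" for f
    unfolding injective_coloring_def by simp
  then show ?thesis
    using inj_chromatic_le by (metis le0 le_antisym)
next
  case False
  then obtain v where "v \<in> V" by blast
  then have "replicate (n - 1) v \<in> sierp_verts V (n - 1)"
    unfolding sierp_verts_def by auto
  moreover obtain f where "injective_coloring (sierp_verts V (Suc (n - 1))) (sierp_adj E (Suc (n - 1)))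
      (inj_chromatic (sierp_verts V n) (sierp_adj E n)) f"
    using injective_coloring_inj_chromatic[OF sierp_verts_finite[OF assms(1)]] assms(2) by auto
  ultimately show ?thesis
    using injective_coloring_sierp_copy inj_chromatic_le by blast
qed

lemma injective_coloring_sierp_one:
  assumes G: "simple_graph V E" and c: "injective_coloring V E k c"
  shows "injective_coloring (sierp_verts V 1) (sierp_adj E 1) k (\<lambda>x. c (last x))"
proof (rule injective_coloring_sierpI)
  show "\<not> E a a" for a
    using simple_graph_irrefl[OF G] .
  show "c (last x) \<in> {1..k}" if "x \<in> sierp_verts V 1" for x
  proof -
    have "x \<noteq> []" "set x \<subseteq> V"
      using that unfolding sierp_verts_def by auto
    then show ?thesis
      using injective_coloring_in_range[OF c] last_in_set by blast
  qed
  show "c (last (q @ [a])) \<noteq> c (last (q @ [b]))"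
    if "a \<noteq> b" "E x a" "E x b" for q a b x
    using that injective_coloring_common_neighbour[OF c] simple_graph_in_verts[OF G] by simp
  show "c (last (q @ b # replicate (Suc j) a)) \<noteq> c (last (q @ a # replicate j b @ [x]))"
    if "q @ b # replicate (Suc j) a \<in> sierp_verts V 1" for q a b j x
    using that unfolding sierp_verts_def by simp
qed

lemma sierp_one_inj_chromatic_le:
  assumes G: "simple_graph V E"
  shows "inj_chromatic (sierp_verts V 1) (sierp_adj E 1) \<le> inj_chromatic V E"
proof -
  obtain c where "injective_coloring V E (inj_chromatic V E) c"
    using injective_coloring_inj_chromatic[OF simple_graph_finite[OF G]] by blast
  then show ?thesis
    using inj_chromatic_le[OF injective_coloring_sierp_one[OF G]] by blast
qed

text \<open>The two swap conditions are the swap pairs with \<open>j = 0\<close>, ending in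
  \<open>b a\<close> and \<open>a x\<close>, and with \<open>j > 0\<close>, ending in \<open>a a\<close> and \<open>b x\<close>.\<close>

lemma injective_coloring_sierp_last_two:
  assumes G: "simple_graph V E" and n: "2 \<le> n"
    and g: "\<And>v. v \<in> V \<Longrightarrow> injective_coloring V E k (g v)"
    and swap_last: "\<And>a b x. E a b \<Longrightarrow> E b x \<Longrightarrow> g b a \<noteq> g a x"
    and swap_long: "\<And>a b x. E a b \<Longrightarrow> E b x \<Longrightarrow> g a a \<noteq> g b x"
  shows "injective_coloring (sierp_verts V n) (sierp_adj E n) k (\<lambda>x. g (last (butlast x)) (last x))"
proof (rule injective_coloring_sierpI)
  show "\<not> E a a" for a
    using simple_graph_irrefl[OF G] .
  show "g (last (butlast x)) (last x) \<in> {1..k}" if "x \<in> sierp_verts V n" for x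
  proof -
    have "butlast x \<noteq> []"
      using that n unfolding sierp_verts_def by (cases x rule: rev_cases) auto
    then have "last (butlast x) \<in> set x" "last x \<in> set x"
      by (auto intro: in_set_butlastD last_in_set)
    then have "last (butlast x) \<in> V" "last x \<in> V"
      using that unfolding sierp_verts_def by auto
    then show ?thesis
      using injective_coloring_in_range[OF g] by blast
  qed
  show "g (last (butlast (q @ [a]))) (last (q @ [a])) \<noteq> g (last (butlast (q @ [b]))) (last (q @ [b]))"
    if "q @ [a] \<in> sierp_verts V n" "a \<noteq> b" "E x a" "E x b" for q a b x
  proof -
    have "q \<noteq> []" "set q \<subseteq> V"
      using that(1) n unfolding sierp_verts_def by auto
    then have "last q \<in> V" by auto
    moreover have "a \<in> V" "b \<in> V" "x \<in> V"
      using simple_graph_in_verts[OF G] that(3,4) by blast+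
    ultimately show ?thesis
      using that(2-4) injective_coloring_common_neighbour[OF g] by simp
  qed
  show "g (last (butlast (q @ b # replicate (Suc j) a))) (last (q @ b # replicate (Suc j) a))
      \<noteq> g (last (butlast (q @ a # replicate j b @ [x]))) (last (q @ a # replicate j b @ [x]))"
    if "E a b" "E b x" for q a b j x
  proof (cases j)
    case 0
    then show ?thesis using swap_last[OF that] by (simp add: butlast_append)
  next
    case (Suc i)
    then have "q @ b # replicate (Suc j) a = (q @ b # replicate i a) @ [a, a]"
      "q @ a # replicate j b @ [x] = (q @ a # replicate i b) @ [b, x]"
      by (simp_all del: replicate_Suc add: replicate_Suc_snoc)
    then show ?thesis
      using swap_long[OF that] by (simp add: butlast_append)
  qed
qed

lemma injective_coloring_sierp_fresh_colour:
  assumes G: "simple_graph V E" and n: "2 \<le> n" and c: "injective_coloring V E k c"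
  shows "injective_coloring (sierp_verts V n) (sierp_adj E n) (k + 1)
    (\<lambda>x. if last x = last (butlast x) then k + 1 else c (last x))"
proof (rule injective_coloring_sierp_last_two[OF G n])
  have c_le: "c x \<le> k" if "E b x" for b x
    using injective_coloring_in_range[OF c] simple_graph_in_verts[OF G that] by simp
  show "injective_coloring V E (k + 1) (\<lambda>u. if u = v then k + 1 else c u)" for v
    by (rule injective_coloring_fresh_colour[OF c])
  show "(if a = b then k + 1 else c a) \<noteq> (if x = a then k + 1 else c x)"
    if "E a b" "E b x" for a b x
  proof -
    have "a \<noteq> b" "E b a"
      using that(1) simple_graph_irrefl[OF G] simple_graph_sym[OF G] by auto
    have "c x \<noteq> c a" if "x \<noteq> a"
      using injective_coloring_common_neighbour[OF c _ _ _ that \<open>E b x\<close> \<open>E b a\<close>]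
        simple_graph_in_verts[OF G \<open>E b a\<close>] simple_graph_in_verts[OF G \<open>E b x\<close>] by blast
    then show ?thesis
      using c_le[OF \<open>E b a\<close>] \<open>a \<noteq> b\<close> by auto
  qed
  show "(if a = a then k + 1 else c a) \<noteq> (if x = b then k + 1 else c x)"
    if "E a b" "E b x" for a b x
    using c_le[OF that(2)] simple_graph_irrefl[OF G] that(2) by auto
qed

lemma sierp_inj_chromatic_le_Suc:
  assumes G: "simple_graph V E" and n: "1 \<le> n"
  shows "inj_chromatic (sierp_verts V n) (sierp_adj E n) \<le> inj_chromatic V E + 1"
proof (cases "n = 1")
  case True
  then show ?thesis
    using sierp_one_inj_chromatic_le[OF G] by simp
next
  case False
  obtain c where "injective_coloring V E (inj_chromatic V E) c"
    using injective_coloring_inj_chromatic[OF simple_graph_finite[OF G]] by blast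
  then show ?thesis
    using inj_chromatic_le[OF injective_coloring_sierp_fresh_colour[OF G]] n False by simp
qed

lemma sierp_inj_chromatic_ge_3:
  assumes G: "simple_graph V E" and n: "2 \<le> n"
    and "E b a" "E b c" "a \<noteq> c"
  shows "3 \<le> inj_chromatic (sierp_verts V n) (sierp_adj E n)"
proof -
  define w where "w = replicate (n - 2) a"
  have "a \<in> V" "b \<in> V" "c \<in> V" "a \<noteq> b"
    using assms(3-5) simple_graph_in_verts[OF G] simple_graph_irrefl[OF G] by blast+
  then have verts: "w @ [x, y] \<in> sierp_verts V n" if "x \<in> {a, b, c}" "y \<in> {a, b, c}" for x y
    using that n unfolding sierp_verts_def w_def by auto
  have len: "length (w @ [a]) + 0 + 1 = n" "length w + 1 + 1 = n"
    using n unfolding w_def by auto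
  have "sierp_adj E n (w @ [a, b]) (w @ [a, a])" "sierp_adj E n (w @ [a, b]) (w @ [a, c])"
    using sierp_adjI[where q = "w @ [a]" and j = 0] assms(3,4) len(1) by fastforce+
  moreover have "sierp_adj E n (w @ [a, b]) (w @ [b, a])"
    using sierp_adjI[where q = w and j = 1] simple_graph_sym[OF G assms(3)] len(2) by fastforce
  ultimately have
    "card {w @ [a, a], w @ [a, c], w @ [b, a]} \<le> inj_chromatic (sierp_verts V n) (sierp_adj E n)"
    using verts by (intro card_le_inj_chromatic sierp_verts_finite simple_graph_finite[OF G])
      (auto intro!: bexI[of _ "w @ [a, b]"])
  then show ?thesis
    using \<open>a \<noteq> b\<close> \<open>a \<noteq> c\<close> by auto
qed

section \<open>Complete graphs\<close>

definition binary_value :: "nat list \<Rightarrow> nat" where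
  "binary_value = foldl (\<lambda>v d. 2 * v + d) 0"

lemma binary_value_snoc [simp]: "binary_value (xs @ [d]) = 2 * binary_value xs + d"
  unfolding binary_value_def by simp

lemma binary_value_swap:
  "binary_value (q @ b # replicate j a) + a = binary_value (q @ a # replicate j b) + b"
proof (induction j)
  case 0
  then show ?case
    using binary_value_snoc[of q] by simp
next
  case (Suc j)
  then show ?case
    using binary_value_snoc[of "q @ b # replicate j a" a] binary_value_snoc[of "q @ a # replicate j b" b]
    by (simp del: replicate_Suc add: replicate_Suc_snoc)
qed

lemma add_mod_inject:
  fixes h a b p :: nat
  assumes "(h + a) mod p = (h + b) mod p" "a < p" "b < p"
  shows "a = b"
  using assms cong_add_lcancel_nat[of h a b p] cong_less_modulus_unique_nat unfolding cong_def by blast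

text \<open>By \<open>binary_value_swap\<close>, the two words of a swap pair receive the colours of
  \<open>q a b\<^sup>j b\<close> and \<open>q a b\<^sup>j x\<close>, which differ because \<open>b \<noteq> x\<close>.\<close>

lemma injective_coloring_sierp_complete:
  assumes "1 \<le> p"
  shows "injective_coloring (sierp_verts {0..<p} n) (sierp_adj (complete_graph_E p) n) p
    (\<lambda>x. (binary_value (butlast x) + last x) mod p + 1)"
proof (rule injective_coloring_sierpI)
  show "\<not> complete_graph_E p a a" for a
    unfolding complete_graph_E_def by simp
  show "(binary_value (butlast x) + last x) mod p + 1 \<in> {1..p}" for x
    using assms by (simp add: Suc_le_eq)
  show "(binary_value (butlast (q @ [a])) + last (q @ [a])) mod p + 1
      \<noteq> (binary_value (butlast (q @ [b])) + last (q @ [b])) mod p + 1"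
    if "a \<noteq> b" "complete_graph_E p c a" "complete_graph_E p c b" for q a b c
    using that add_mod_inject[of "binary_value q" a p b] unfolding complete_graph_E_def by auto
  show "(binary_value (butlast (q @ b # replicate (Suc j) a)) + last (q @ b # replicate (Suc j) a)) mod p + 1
      \<noteq> (binary_value (butlast (q @ a # replicate j b @ [x])) + last (q @ a # replicate j b @ [x])) mod p + 1"
    if "complete_graph_E p b x" for q a b j x
  proof -
    let ?r = "q @ a # replicate j b"
    have "q @ b # replicate (Suc j) a = (q @ b # replicate j a) @ [a]"
      by (simp del: replicate_Suc add: replicate_Suc_snoc)
    then have "binary_value (butlast (q @ b # replicate (Suc j) a)) + last (q @ b # replicate (Suc j) a)
        = binary_value ?r + b"
      using binary_value_swap[of q b j a] by (simp only: butlast_snoc last_snoc)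
    moreover have "binary_value (butlast (q @ a # replicate j b @ [x])) + last (q @ a # replicate j b @ [x])
        = binary_value ?r + x"
      by (simp add: butlast_append)
    ultimately show ?thesis
      using that add_mod_inject[of "binary_value ?r" b p x] unfolding complete_graph_E_def by auto
  qed
qed

lemma complete_inj_chromatic:
  assumes "3 \<le> p"
  shows "inj_chromatic {0..<p} (complete_graph_E p) = p"
proof (rule antisym)
  show "inj_chromatic {0..<p} (complete_graph_E p) \<le> p"
    using injective_coloring_card[of "{0..<p}" "complete_graph_E p"] inj_chromatic_le by fastforce
  have "\<exists>x\<in>{0..<p}. complete_graph_E p x u \<and> complete_graph_E p x w" if "u < p" "w < p" for u w
  proof -
    have "\<exists>x\<in>{0, 1, 2}. x \<noteq> u \<and> x \<noteq> w"
      by auto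
    then show ?thesis
      using that assms unfolding complete_graph_E_def by auto
  qed
  then show "p \<le> inj_chromatic {0..<p} (complete_graph_E p)"
    using card_le_inj_chromatic[of "{0..<p}" "{0..<p}" "complete_graph_E p"] by simp
qed

lemma sierp_complete_inj_chromatic:
  assumes "3 \<le> p" "1 \<le> n"
  shows "inj_chromatic (sierp_verts {0..<p} n) (sierp_adj (complete_graph_E p) n)
    = inj_chromatic {0..<p} (complete_graph_E p)"
proof (rule antisym)
  show "inj_chromatic (sierp_verts {0..<p} n) (sierp_adj (complete_graph_E p) n)
      \<le> inj_chromatic {0..<p} (complete_graph_E p)"
    using inj_chromatic_le[OF injective_coloring_sierp_complete] complete_inj_chromatic assms(1)
    by simp
  show "inj_chromatic {0..<p} (complete_graph_E p)
      \<le> inj_chromatic (sierp_verts {0..<p} n) (sierp_adj (complete_graph_E p) n)"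
    using inj_chromatic_le_sierp assms(2) by blast
qed

section \<open>Cycles\<close>

text \<open>The number of steps from \<open>v\<close> forward to \<open>u\<close> around \<open>C\<^sub>k\<close>; the
  summand \<open>k - v\<close> avoids truncated subtraction.\<close>

definition cycle_offset :: "nat \<Rightarrow> nat \<Rightarrow> nat \<Rightarrow> nat" where
  "cycle_offset k v u = (u + (k - v)) mod k"

lemma cycle_offset_less: "0 < k \<Longrightarrow> cycle_offset k v u < k"
  unfolding cycle_offset_def by simp

lemma cycle_offset_self: "v \<le> k \<Longrightarrow> cycle_offset k v v = 0"
  unfolding cycle_offset_def by simp

lemma cycle_offset_add:
  assumes "b \<le> k"
  shows "cycle_offset k a x = (cycle_offset k a b + cycle_offset k b x) mod k"
proof -
  have "(cycle_offset k a b + cycle_offset k b x) mod k = (b + (k - a) + (x + (k - b))) mod k"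
    unfolding cycle_offset_def by (simp only: mod_add_eq)
  also have "b + (k - a) + (x + (k - b)) = x + (k - a) + k"
    using assms by simp
  finally show ?thesis
    unfolding cycle_offset_def by simp
qed

lemma cycle_offset_inverse: "v \<le> k \<Longrightarrow> u < k \<Longrightarrow> (v + cycle_offset k v u) mod k = u"
  unfolding cycle_offset_def by (simp add: mod_add_right_eq)

lemma cycle_offset_shift:
  assumes "v \<le> k"
  shows "cycle_offset k v ((v + d) mod k) = d mod k"
proof -
  have "cycle_offset k v ((v + d) mod k) = (v + d + (k - v)) mod k"
    unfolding cycle_offset_def by (simp only: mod_add_left_eq)
  also have "v + d + (k - v) = d + k"
    using assms by simp
  finally show ?thesis by simp
qed

lemma cycle_graph_E_offset:
  assumes "2 \<le> k"
  shows "cycle_graph_E k v u \<longleftrightarrow> v < k \<and> u < k \<and> (cycle_offset k v u = 1 \<or> cycle_offset k u v = 1)"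
proof -
  have "u = (v + 1) mod k \<longleftrightarrow> cycle_offset k v u = 1" if "v < k" "u < k" for v u
    using cycle_offset_shift[of v k 1] cycle_offset_inverse[of v k u] that assms by auto
  then show ?thesis
    unfolding cycle_graph_E_def by auto
qed

lemma add_mod_eq_0_cases:
  fixes s t k :: nat
  assumes "s < k" "t < k" "(s + t) mod k = 0"
  shows "s + t = 0 \<or> s + t = k"
proof (cases "s + t < k")
  case False
  then have "(s + t) mod k = s + t - k"
    using assms(1,2) by (simp add: le_mod_geq)
  then show ?thesis
    using assms(3) False by simp
qed (use assms(3) in simp)

lemma cycle_offset_edge:
  assumes "2 \<le> k" "cycle_graph_E k v u"
  shows "cycle_offset k v u = 1 \<and> cycle_offset k u v = k - 1
    \<or> cycle_offset k v u = k - 1 \<and> cycle_offset k u v = 1"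
proof -
  have lt: "v < k" "u < k" "cycle_offset k v u < k" "cycle_offset k u v < k"
    using assms cycle_graph_E_offset cycle_offset_less by auto
  have "(cycle_offset k v u + cycle_offset k u v) mod k = 0"
    using cycle_offset_add[of u k v v] cycle_offset_self[of v k] lt by simp
  moreover have one: "cycle_offset k v u = 1 \<or> cycle_offset k u v = 1"
    using assms cycle_graph_E_offset by blast
  ultimately have "cycle_offset k v u + cycle_offset k u v = k"
    using add_mod_eq_0_cases[OF lt(3,4)] by auto
  then show ?thesis
    using one by auto
qed

lemma cycle_common_neighbour:
  assumes "3 \<le> k" "cycle_graph_E k c u" "cycle_graph_E k c w" "u \<noteq> w"
  shows "cycle_offset k u w = 2 \<or> cycle_offset k w u = 2"
proof -
  have lt: "c < k" "u < k" "w < k"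
    using assms(2,3) unfolding cycle_graph_E_def by auto
  have "2 \<le> k"
    using assms(1) by simp
  note edges = cycle_offset_edge[OF this assms(2)] cycle_offset_edge[OF this assms(3)]
  have "cycle_offset k c u \<noteq> cycle_offset k c w"
    using cycle_offset_inverse[of c k u] cycle_offset_inverse[of c k w] lt assms(4) by auto
  with edges consider "cycle_offset k u c = 1" "cycle_offset k c w = 1"
    | "cycle_offset k w c = 1" "cycle_offset k c u = 1"
    by (elim disjE conjE) auto
  then show ?thesis
  proof cases
    case 1
    then show ?thesis using cycle_offset_add[of c k u w] lt assms(1) by simp
  next
    case 2
    then show ?thesis using cycle_offset_add[of c k w u] lt assms(1) by simp
  qed
qed

lemma cycle_graph_simple:
  assumes "3 \<le> k"
  shows "simple_graph {0..<k} (cycle_graph_E k)"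
proof -
  have "u \<noteq> (u + 1) mod k" if "u < k" for u
  proof (cases "u + 1 < k")
    case False
    then have "u + 1 = k" using that by simp
    then show ?thesis using assms by simp
  qed simp
  then show ?thesis
    unfolding simple_graph_def cycle_graph_E_def by auto
qed

lemma cycle_graph_E_3: "cycle_graph_E 3 = complete_graph_E 3"
proof (intro ext)
  fix i j :: nat
  show "cycle_graph_E 3 i j = complete_graph_E 3 i j"
  proof (cases "i < 3 \<and> j < 3")
    case True
    then have "i \<in> {0, 1, 2}" "j \<in> {0, 1, 2}" by auto
    then show ?thesis
      unfolding cycle_graph_E_def complete_graph_E_def by (elim insertE emptyE) simp_all
  next
    case False
    then show ?thesis
      unfolding cycle_graph_E_def complete_graph_E_def by auto
  qed
qed

definition cycle_colour :: "nat \<Rightarrow> nat \<Rightarrow> nat" where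
  "cycle_colour k t = (if k - 2 \<le> t then 3 else (t + 1) div 2 mod 2 + 1)"

lemma cycle_colour_range: "cycle_colour k t \<in> {1..3}"
  unfolding cycle_colour_def by auto

lemma cycle_colour_step:
  assumes "5 \<le> k" "t < k"
  shows "cycle_colour k t \<noteq> cycle_colour k ((t + 2) mod k)"
proof -
  consider "t + 2 < k" | "t + 2 = k" | "t + 2 = k + 1"
    using assms by linarith
  then show ?thesis
  proof cases
    case 1
    have "(t + 2 + 1) div 2 = (t + 1) div 2 + 1"
      by simp
    then have "(t + 2 + 1) div 2 mod 2 \<noteq> (t + 1) div 2 mod 2"
      by (simp add: mod_Suc)
    then show ?thesis
      unfolding cycle_colour_def using 1 by auto
  next
    case 2
    then show ?thesis
      unfolding cycle_colour_def using assms by auto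
  next
    case 3
    then have "(t + 2) mod k = 1"
      using assms by (simp add: mod_Suc)
    then show ?thesis
      unfolding cycle_colour_def using 3 assms by auto
  qed
qed

lemma injective_coloring_cycle_offset:
  assumes k: "5 \<le> k" and v: "v < k"
  shows "injective_coloring {0..<k} (cycle_graph_E k) 3 (\<lambda>u. cycle_colour k (cycle_offset k v u))"
proof -
  have distinct: "cycle_colour k (cycle_offset k v u) \<noteq> cycle_colour k (cycle_offset k v w)"
    if "u < k" "cycle_offset k u w = 2" for u w
  proof -
    have "cycle_offset k v w = (cycle_offset k v u + 2) mod k"
      using cycle_offset_add[of u k v w] that by simp
    then show ?thesis
      using cycle_colour_step[OF k cycle_offset_less] k by simp
  qed
  show ?thesis
    unfolding injective_coloring_def
  proof (intro conjI ballI impI notI)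
    show "cycle_colour k (cycle_offset k v u) \<in> {1..3}" for u
      by (rule cycle_colour_range)
  next
    fix u w
    assume "u \<in> {0..<k}" "w \<in> {0..<k}"
      and uw: "u \<noteq> w \<and> cycle_colour k (cycle_offset k v u) = cycle_colour k (cycle_offset k v w)"
      and "\<exists>c\<in>{0..<k}. cycle_graph_E k c u \<and> cycle_graph_E k c w"
    then obtain c where "cycle_graph_E k c u" "cycle_graph_E k c w" "u < k" "w < k"
      by auto
    then show False
      using cycle_common_neighbour[of k c u w] distinct[of u w] distinct[of w u] uw k by auto
  qed
qed

lemma injective_coloring_sierp_cycle:
  assumes k: "5 \<le> k" and n: "2 \<le> n"
  shows "injective_coloring (sierp_verts {0..<k} n) (sierp_adj (cycle_graph_E k) n) 3
    (\<lambda>x. cycle_colour k (cycle_offset k (last (butlast x)) (last x)))"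
proof (rule injective_coloring_sierp_last_two[OF cycle_graph_simple n])
  show "3 \<le> k"
    using k by simp
  show "injective_coloring {0..<k} (cycle_graph_E k) 3 (\<lambda>u. cycle_colour k (cycle_offset k v u))"
    if "v \<in> {0..<k}" for v
    using injective_coloring_cycle_offset[OF k] that by simp
  have k2: "2 \<le> k"
    using k by simp
  show "cycle_colour k (cycle_offset k b a) \<noteq> cycle_colour k (cycle_offset k a x)"
    if "cycle_graph_E k a b" "cycle_graph_E k b x" for a b x
  proof -
    have "cycle_offset k a x = (cycle_offset k a b + cycle_offset k b x) mod k"
      using cycle_offset_add[of b k a x] that(1) unfolding cycle_graph_E_def by simp
    moreover have "(k - 1 + (k - 1)) mod k = k - 2" "(1 + (k - 1)) mod k = 0" "(k - 1 + 1) mod k = 0"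
      using k by (simp_all add: le_mod_geq)
    ultimately show ?thesis
      using cycle_offset_edge[OF k2 that(1)] cycle_offset_edge[OF k2 that(2)] k
      by (auto simp: cycle_colour_def)
  qed
  show "cycle_colour k (cycle_offset k a a) \<noteq> cycle_colour k (cycle_offset k b x)"
    if "cycle_graph_E k a b" "cycle_graph_E k b x" for a b x
    using that cycle_offset_self[of a k] cycle_offset_edge[OF k2 that(2)] k
    unfolding cycle_graph_E_def by (auto simp: cycle_colour_def)
qed

lemma cycle_injective_coloring_two_apart:
  assumes k: "3 \<le> k" and f: "injective_coloring {0..<k} (cycle_graph_E k) m f" and t: "t < k"
  shows "f t \<noteq> f ((t + 2) mod k)"
proof -
  have "((t + 1) mod k + 1) mod k = (t + 2) mod k"
    using mod_add_left_eq[of "t + 1" k 1] by simp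
  then have "cycle_graph_E k ((t + 1) mod k) ((t + 2) mod k)"
    unfolding cycle_graph_E_def using k by simp
  moreover have "cycle_graph_E k ((t + 1) mod k) t"
    unfolding cycle_graph_E_def using t k by auto
  moreover have "t \<noteq> (t + 2) mod k"
    using t k by (auto simp: mod_if)
  ultimately show ?thesis
    using injective_coloring_common_neighbour[OF f, of t "(t + 2) mod k" "(t + 1) mod k"] t k
    by simp
qed

lemma odd_mult_2_mod_eq_0:
  fixes k :: nat
  assumes "k mod 4 \<noteq> 0"
  obtains j where "odd j" "2 * j mod k = 0"
proof (cases "odd k")
  case False
  then obtain m where m: "k = 2 * m"
    by blast
  have "odd m"
  proof
    assume "even m"
    then obtain l where "m = 2 * l"
      by blast
    then show False
      using m assms by simp
  qed
  then show ?thesis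
    using that[of m] m by simp
qed (use that[of k] in simp)

text \<open>With two colours, \<open>t\<close> and \<open>t + 2\<close> always get different colours, so the
  colours alternate along \<open>0, 2, 4, \<dots>\<close>; unless \<open>4\<close> divides \<open>k\<close>, an odd
  number of such steps returns to \<open>0\<close>.\<close>

lemma cycle_injective_coloring_ge_3:
  assumes k: "3 \<le> k" "k mod 4 \<noteq> 0" and f: "injective_coloring {0..<k} (cycle_graph_E k) m f"
  shows "3 \<le> m"
proof (rule ccontr)
  assume "\<not> 3 \<le> m"
  then have two: "f t = 1 \<or> f t = 2" if "t < k" for t
    using injective_coloring_in_range[OF f] that by fastforce
  have alternate: "f (2 * j mod k) = (if even j then f 0 else 3 - f 0)" for j
  proof (induction j)
    case (Suc j)
    have t: "2 * j mod k < k"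
      using k(1) by simp
    have "2 * Suc j mod k = (2 * j mod k + 2) mod k"
      using mod_add_left_eq[of "2 * j" k 2] by simp
    then have "f (2 * j mod k) \<noteq> f (2 * Suc j mod k)"
      using cycle_injective_coloring_two_apart[OF k(1) f t] by simp
    then have "f (2 * Suc j mod k) = 3 - f (2 * j mod k)"
      using two[OF t] two[of "2 * Suc j mod k"] k(1) by auto
    then show ?case
      using Suc two[of 0] k(1) by auto
  qed simp
  obtain j where "odd j" "2 * j mod k = 0"
    using odd_mult_2_mod_eq_0[OF k(2)] .
  then have "f 0 = 3 - f 0"
    using alternate[of j] by simp
  then show False
    using two[of 0] k(1) by auto
qed

lemma cycle_inj_chromatic_ge_3:
  assumes "3 \<le> k" "k mod 4 \<noteq> 0"
  shows "3 \<le> inj_chromatic {0..<k} (cycle_graph_E k)"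
  using injective_coloring_inj_chromatic[of "{0..<k}" "cycle_graph_E k"]
    cycle_injective_coloring_ge_3[OF assms] by blast

lemma injective_coloring_cycle_mult4:
  assumes k: "3 \<le> k" "k mod 4 = 0"
  shows "injective_coloring {0..<k} (cycle_graph_E k) 2 (\<lambda>u. u mod 4 div 2 + 1)"
proof -
  have step: "u mod 4 div 2 \<noteq> w mod 4 div 2" if "u < k" "w < k" "cycle_offset k u w = 2" for u w
  proof -
    have "w = (u + 2) mod k"
      using cycle_offset_inverse[of u k w] that by simp
    then have "w mod 4 = (u + 2) mod 4"
      using k(2) by (simp add: mod_mod_cancel mod_0_imp_dvd)
    also have "\<dots> = (u mod 4 + 2) mod 4"
      by (rule mod_add_left_eq[symmetric])
    finally have "w mod 4 = (u mod 4 + 2) mod 4" .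
    moreover have "u mod 4 \<in> {0, 1, 2, 3}"
      by auto
    ultimately show ?thesis
      by auto
  qed
  show ?thesis
    unfolding injective_coloring_def
  proof (intro conjI ballI impI notI)
    fix u w
    assume uw: "u \<noteq> w \<and> u mod 4 div 2 + 1 = w mod 4 div 2 + 1"
      and "\<exists>c\<in>{0..<k}. cycle_graph_E k c u \<and> cycle_graph_E k c w"
    then obtain c where c: "cycle_graph_E k c u" "cycle_graph_E k c w"
      by blast
    then have "u < k" "w < k"
      unfolding cycle_graph_E_def by auto
    then show False
      using cycle_common_neighbour[OF k(1) c] step[of u w] step[of w u] uw by auto
  qed auto
qed

lemma cycle_inj_chromatic_mult4:
  assumes k: "3 \<le> k" "k mod 4 = 0"
  shows "inj_chromatic {0..<k} (cycle_graph_E k) = 2"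
proof (rule antisym)
  show "inj_chromatic {0..<k} (cycle_graph_E k) \<le> 2"
    using inj_chromatic_le[OF injective_coloring_cycle_mult4[OF k]] .
  have "cycle_graph_E k 1 0" "cycle_graph_E k 1 2"
    using k unfolding cycle_graph_E_def by auto
  then have "card {0, 2 :: nat} \<le> inj_chromatic {0..<k} (cycle_graph_E k)"
    using k by (intro card_le_inj_chromatic) auto
  then show "2 \<le> inj_chromatic {0..<k} (cycle_graph_E k)"
    by simp
qed

lemma sierp_cycle_inj_chromatic:
  assumes k: "3 \<le> k" "k mod 4 \<noteq> 0" and n: "1 \<le> n"
  shows "inj_chromatic (sierp_verts {0..<k} n) (sierp_adj (cycle_graph_E k) n)
    = inj_chromatic {0..<k} (cycle_graph_E k)"
proof (cases "k = 3")
  case True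
  then show ?thesis
    using sierp_complete_inj_chromatic[OF _ n] cycle_graph_E_3 by simp
next
  case False
  with k have k5: "5 \<le> k"
    by (cases "k = 4") auto
  show ?thesis
  proof (rule antisym)
    show "inj_chromatic (sierp_verts {0..<k} n) (sierp_adj (cycle_graph_E k) n)
        \<le> inj_chromatic {0..<k} (cycle_graph_E k)"
    proof (cases "n = 1")
      case True
      then show ?thesis
        using sierp_one_inj_chromatic_le[OF cycle_graph_simple[OF k(1)]] by simp
    next
      case False
      then have "inj_chromatic (sierp_verts {0..<k} n) (sierp_adj (cycle_graph_E k) n) \<le> 3"
        using inj_chromatic_le[OF injective_coloring_sierp_cycle[OF k5]] n by simp
      then show ?thesis
        using cycle_inj_chromatic_ge_3[OF k] by simp
    qed
    show "inj_chromatic {0..<k} (cycle_graph_E k)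
        \<le> inj_chromatic (sierp_verts {0..<k} n) (sierp_adj (cycle_graph_E k) n)"
      using inj_chromatic_le_sierp n by blast
  qed
qed

lemma sierp_cycle_inj_chromatic_mult4:
  assumes k: "3 \<le> k" "k mod 4 = 0" and n: "2 \<le> n"
  shows "inj_chromatic (sierp_verts {0..<k} n) (sierp_adj (cycle_graph_E k) n)
    = inj_chromatic {0..<k} (cycle_graph_E k) + 1"
proof -
  have "cycle_graph_E k 1 0" "cycle_graph_E k 1 2"
    using k unfolding cycle_graph_E_def by auto
  then have "3 \<le> inj_chromatic (sierp_verts {0..<k} n) (sierp_adj (cycle_graph_E k) n)"
    using sierp_inj_chromatic_ge_3[OF cycle_graph_simple[OF k(1)] n] by simp
  moreover have "inj_chromatic (sierp_verts {0..<k} n) (sierp_adj (cycle_graph_E k) n) \<le> 3"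
    using sierp_inj_chromatic_le_Suc[OF cycle_graph_simple[OF k(1)]] cycle_inj_chromatic_mult4[OF k] n
    by simp
  ultimately show ?thesis
    using cycle_inj_chromatic_mult4[OF k] by simp
qed

theorem mainTheorem4:
  shows "(\<forall>(V :: 'a set) E (n :: nat). simple_graph V E \<and> n \<ge> 1 \<longrightarrow>
            inj_chromatic V E \<le> inj_chromatic (sierp_verts V n) (sierp_adj E n) \<and>
            inj_chromatic (sierp_verts V n) (sierp_adj E n) \<le> inj_chromatic V E + 1)
       \<and> (\<forall>p n :: nat. p \<ge> 3 \<and> n \<ge> 1 \<longrightarrow>
            inj_chromatic (sierp_verts {0..<p} n) (sierp_adj (complete_graph_E p) n)
              = inj_chromatic {0..<p} (complete_graph_E p))
       \<and> (\<forall>k n :: nat. k \<ge> 3 \<and> k mod 4 \<noteq> 0 \<and> n \<ge> 1 \<longrightarrow>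
            inj_chromatic (sierp_verts {0..<k} n) (sierp_adj (cycle_graph_E k) n)
              = inj_chromatic {0..<k} (cycle_graph_E k))
       \<and> (\<forall>k n :: nat. k \<ge> 3 \<and> k mod 4 = 0 \<and> n \<ge> 2 \<longrightarrow>
            inj_chromatic (sierp_verts {0..<k} n) (sierp_adj (cycle_graph_E k) n)
              = inj_chromatic {0..<k} (cycle_graph_E k) + 1)"
proof (intro conjI allI impI; elim conjE)
  fix V :: "'a set" and E and n :: nat
  assume "simple_graph V E" "n \<ge> 1"
  then show "inj_chromatic V E \<le> inj_chromatic (sierp_verts V n) (sierp_adj E n)"
    "inj_chromatic (sierp_verts V n) (sierp_adj E n) \<le> inj_chromatic V E + 1"
    using inj_chromatic_le_sierp[OF simple_graph_finite] sierp_inj_chromatic_le_Suc by blast+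
qed (simp_all add: sierp_complete_inj_chromatic sierp_cycle_inj_chromatic
  sierp_cycle_inj_chromatic_mult4)

end
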